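(* Let $n \ge 2$ and $0 \le s \le 2n-2$. The number of Dyck paths of semilength $n$ in which the sum of the heights of the first peak and the last peak equals $s$ is \[ \sum_{j=1}^{\lfloor s/2\rfloor} (-1)^{j-1}\, j \binom{s-j}{j} C_{n-1-j}, \] where $C_r = \frac{1}{r+1}\binom{2r}{r}$ is the $r$-th Catalan number.
   Context: A Dyck path of semilength $n$ is a lattice path from $(0,0)$ to $(2n,0)$ with steps $U=(1,1)$ and $D=(1,-1)$ never going below the $x$-axis. A peak is an up-step immediately followed by a down-step; its height is the $y$-coordinate at the end of its up-step. If the path has only one peak, that peak is both the first and the last peak. *)

theory Defs
  imports Main
begin

text \<open>A lattice path is encoded as a list of steps: True = U = (1,1), False = D = (1,-1).\<close>

definition height :: "bool list \<Rightarrow> int" where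
  "height xs = int (length (filter id xs)) - int (length (filter Not xs))"

definition dyck_path :: "nat \<Rightarrow> bool list \<Rightarrow> bool" where
  "dyck_path n xs \<longleftrightarrow> length xs = 2 * n \<and> height xs = 0 \<and>
     (\<forall>k \<le> length xs. height (take k xs) \<ge> 0)"

definition peaks :: "bool list \<Rightarrow> nat set" where
  "peaks xs = {i. Suc i < length xs \<and> xs ! i \<and> \<not> xs ! Suc i}"

definition peak_height :: "bool list \<Rightarrow> nat \<Rightarrow> int" where
  "peak_height xs i = height (take (Suc i) xs)"

definition first_peak_height :: "bool list \<Rightarrow> int" where
  "first_peak_height xs = peak_height xs (Min (peaks xs))"

definition last_peak_height :: "bool list \<Rightarrow> int" where
  "last_peak_height xs = peak_height xs (Max (peaks xs))"

definition catalan :: "nat \<Rightarrow> nat" where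
  "catalan r = ((2 * r) choose r) div (r + 1)"

end

theory Submission
  imports Defs
begin

text \<open>
  Removing the initial run \<open>U\<^sup>a D\<close> and the final run \<open>U D\<^sup>b\<close> maps the Dyck paths of
  semilength \<open>n\<close> whose first and last peaks have heights \<open>a\<close> and \<open>b\<close> (\<open>a + b \<le> 2n - 2\<close>)
  bijectively onto the paths of length \<open>2n - a - b - 2\<close> from height \<open>a - 1\<close> to height \<open>b - 1\<close>
  that never go below zero. For \<open>L + p + q = 2N\<close>, the number of such paths of length \<open>L\<close> from
  \<open>p\<close> to \<open>q\<close> equals \<open>\<Sum>i k. (-1)^(i+k) binom(p-i,i) binom(q-k,k) Cat(N-i-k)\<close>: both sides are
  \<open>Cat(N)\<close> for \<open>p = q = 0\<close>, and both satisfy the Chebyshev recurrence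
  \<open>f(p+2, N) = f(p+1, N) - f(p, N-1)\<close> in \<open>p\<close> and in \<open>q\<close>. Summing over \<open>p + q = s - 2\<close>, the
  identity \<open>\<Sum>p. binom(p-i,i) binom(M-p-k,k) = binom(M+1-i-k, i+k+1)\<close> makes each term depend
  only on \<open>j = i + k\<close>, which arises in \<open>j + 1\<close> ways.
\<close>

section \<open>Nonnegative paths\<close>

lemma height_Nil [simp]: "height [] = 0"
  unfolding height_def by simp

lemma height_Cons [simp]: "height (x # xs) = (if x then 1 else -1) + height xs"
  unfolding height_def by auto

lemma height_append [simp]: "height (xs @ ys) = height xs + height ys"
  unfolding height_def by simp

lemma height_replicate_True [simp]: "height (replicate a True) = int a"
  by (induction a) auto

lemma height_replicate_False [simp]: "height (replicate a False) = - int a"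
  by (induction a) auto

fun nonneg_from :: "int \<Rightarrow> bool list \<Rightarrow> bool" where
  "nonneg_from h [] \<longleftrightarrow> 0 \<le> h"
| "nonneg_from h (x # xs) \<longleftrightarrow> 0 \<le> h \<and> nonneg_from (h + (if x then 1 else -1)) xs"

lemma nonneg_from_iff_prefixes:
  "nonneg_from h xs \<longleftrightarrow> (\<forall>k \<le> length xs. 0 \<le> h + height (take k xs))"
proof (induction xs arbitrary: h)
  case Nil
  then show ?case by simp
next
  case (Cons x xs)
  have "(\<forall>k \<le> length (x # xs). 0 \<le> h + height (take k (x # xs))) \<longleftrightarrow>
        0 \<le> h \<and> (\<forall>k \<le> length xs. 0 \<le> h + (if x then 1 else -1) + height (take k xs))"
  proof (intro iffI conjI allI impI)
    fix k
    assume "\<forall>k \<le> length (x # xs). 0 \<le> h + height (take k (x # xs))" and "k \<le> length xs"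
    then show "0 \<le> h + (if x then 1 else -1) + height (take k xs)"
      by (auto dest: spec[of _ "Suc k"] simp: algebra_simps)
  next
    fix k
    assume "0 \<le> h \<and> (\<forall>k \<le> length xs. 0 \<le> h + (if x then 1 else -1) + height (take k xs))"
      and "k \<le> length (x # xs)"
    then show "0 \<le> h + height (take k (x # xs))"
      by (cases k) (auto simp: algebra_simps)
  qed (auto dest: spec[of _ 0])
  then show ?case using Cons.IH by simp
qed

lemma nonneg_from_append:
  "nonneg_from h (xs @ ys) \<longleftrightarrow> nonneg_from h xs \<and> nonneg_from (h + height xs) ys"
  by (induction xs arbitrary: h) (auto simp: algebra_simps elim: nonneg_from.elims)

lemma nonneg_from_start: "nonneg_from h xs \<Longrightarrow> 0 \<le> h"
  by (cases xs) auto

lemma nonneg_from_end: "nonneg_from h xs \<Longrightarrow> 0 \<le> h + height xs"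
  using nonneg_from_iff_prefixes[of h xs] by auto

lemma nonneg_from_replicate_True: "0 \<le> h \<Longrightarrow> nonneg_from h (replicate a True)"
  by (induction a arbitrary: h) auto

lemma nonneg_from_replicate_False: "nonneg_from h (replicate b False) \<longleftrightarrow> int b \<le> h"
  by (induction b arbitrary: h) auto

lemma dyck_path_iff_nonneg_from:
  "dyck_path n xs \<longleftrightarrow> length xs = 2 * n \<and> height xs = 0 \<and> nonneg_from 0 xs"
  unfolding dyck_path_def nonneg_from_iff_prefixes by simp

definition nonneg_paths :: "nat \<Rightarrow> nat \<Rightarrow> nat \<Rightarrow> bool list set" where
  "nonneg_paths L p q = {ys. length ys = L \<and> nonneg_from (int p) ys \<and> int p + height ys = int q}"

lemma finite_nonneg_paths: "finite (nonneg_paths L p q)"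
proof (rule finite_subset)
  show "nonneg_paths L p q \<subseteq> {xs. set xs \<subseteq> UNIV \<and> length xs = L}"
    unfolding nonneg_paths_def by auto
  show "finite {xs. set xs \<subseteq> (UNIV :: bool set) \<and> length xs = L}"
    by (rule finite_lists_length_eq) simp
qed

lemma nonneg_paths_0: "nonneg_paths 0 p q = (if p = q then {[]} else {})"
  unfolding nonneg_paths_def by auto

lemma nonneg_paths_Suc:
  "nonneg_paths (Suc L) p q = Cons True ` nonneg_paths L (Suc p) q \<union>
     (if p = 0 then {} else Cons False ` nonneg_paths L (p - 1) q)"
proof (rule set_eqI)
  fix ys
  show "ys \<in> nonneg_paths (Suc L) p q \<longleftrightarrow> ys \<in> Cons True ` nonneg_paths L (Suc p) q \<union>
          (if p = 0 then {} else Cons False ` nonneg_paths L (p - 1) q)"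
    by (cases ys) (auto simp: nonneg_paths_def algebra_simps of_nat_diff dest: nonneg_from_start)
qed

section \<open>Ballot numbers\<close>

fun ballot :: "nat \<Rightarrow> nat \<Rightarrow> nat \<Rightarrow> nat" where
  "ballot 0 p q = (if p = q then 1 else 0)"
| "ballot (Suc L) p q = ballot L (Suc p) q + (if p = 0 then 0 else ballot L (p - 1) q)"

lemma card_nonneg_paths: "card (nonneg_paths L p q) = ballot L p q"
proof (induction L arbitrary: p)
  case 0
  then show ?case by (simp add: nonneg_paths_0)
next
  case (Suc L)
  have "Cons True ` nonneg_paths L (Suc p) q \<inter> Cons False ` nonneg_paths L (p - 1) q = {}"
    by auto
  then show ?case
    by (simp add: nonneg_paths_Suc card_image card_Un_disjoint finite_nonneg_paths Suc.IH)
qed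

lemma ballot_Suc_right:
  "ballot (Suc L) p q = ballot L p (Suc q) + (if q = 0 then 0 else ballot L p (q - 1))"
proof (induction L arbitrary: p q)
  case 0
  then show ?case by (cases p; cases q; simp)
next
  case (Suc L)
  have "ballot (Suc (Suc L)) p q
          = ballot (Suc L) (Suc p) q + (if p = 0 then 0 else ballot (Suc L) (p - 1) q)"
       "ballot (Suc L) p (Suc q) = ballot L (Suc p) (Suc q) + (if p = 0 then 0 else ballot L (p - 1) (Suc q))"
       "ballot (Suc L) p (q - 1) = ballot L (Suc p) (q - 1) + (if p = 0 then 0 else ballot L (p - 1) (q - 1))"
    by (rule ballot.simps(2))+
  then show ?case
    by (simp only: Suc.IH) simp
qed

definition int_choose :: "nat \<Rightarrow> int \<Rightarrow> int" where
  "int_choose L k = (if 0 \<le> k then int (L choose nat k) else 0)"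

lemma int_choose_0: "int_choose 0 k = (if k = 0 then 1 else 0)"
  unfolding int_choose_def by simp

lemma int_choose_Suc: "int_choose (Suc L) k = int_choose L (k - 1) + int_choose L k"
proof (cases "k \<le> 0")
  case False
  then have "nat k = Suc (nat (k - 1))" by simp
  then show ?thesis using False unfolding int_choose_def by simp
qed (auto simp: int_choose_def)

text \<open>Reflection principle; \<open>u\<close> is the number of up-steps.\<close>

lemma ballot_reflection:
  assumes "int L + int q - int p = 2 * u"
  shows "int (ballot L p q) = int_choose L u - int_choose L (u + int p + 1)"
  using assms
proof (induction L arbitrary: p u)
  case 0
  then show ?case by (auto simp: int_choose_0)
next
  case (Suc L)
  have up: "int (ballot L (Suc p) q) = int_choose L (u - 1) - int_choose L (u + int p + 1)"
    using Suc.IH[of "Suc p" "u - 1"] Suc.prems by (simp add: algebra_simps)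
  show ?case
  proof (cases p)
    case 0
    then show ?thesis using up int_choose_Suc[of L u] int_choose_Suc[of L "u + 1"] by simp
  next
    case (Suc p')
    have "int (ballot L p' q) = int_choose L u - int_choose L (u + int p)"
      using Suc.IH[of p' u] Suc.prems \<open>p = Suc p'\<close> by (simp add: algebra_simps)
    then show ?thesis
      using up \<open>p = Suc p'\<close> int_choose_Suc[of L u] int_choose_Suc[of L "u + int p + 1"]
      by (simp add: ac_simps)
  qed
qed

lemma catalan_eq_diff_choose:
  "int (catalan r) = int ((2 * r) choose r) - int ((2 * r) choose (Suc r))"
proof -
  define C where "C = (2 * r) choose r"
  define D where "D = (2 * r) choose (Suc r)"
  have DC: "D * Suc r = C * r"
  proof (cases r)
    case (Suc r')
    then have "2 * r = Suc (Suc r' + r')" by simp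
    then show ?thesis unfolding C_def D_def using Suc_times_binomial_add[of "Suc r'" r'] Suc
      by (simp only: mult.commute)
  qed (simp add: D_def)
  have "(C - D) * Suc r = C * Suc r - D * Suc r"
    by (rule diff_mult_distrib)
  also have "\<dots> = C"
    using DC by simp
  finally have "C div Suc r = C - D"
    by (metis nonzero_mult_div_cancel_right nat.distinct(1))
  then have "catalan r = C - D"
    unfolding catalan_def C_def by simp
  moreover have "D \<le> C"
  proof -
    have "D * Suc r \<le> C * Suc r" using DC by simp
    then show ?thesis by (simp only: mult_le_cancel2)
  qed
  ultimately have "int (catalan r) = int C - int D"
    by (simp add: of_nat_diff)
  then show ?thesis unfolding C_def D_def .
qed

lemma ballot_catalan: "ballot (2 * r) 0 0 = catalan r"
proof -
  have "nat (int r + 1) = Suc r" by simp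
  then have "int_choose (2 * r) (int r) - int_choose (2 * r) (int r + 1) = int (catalan r)"
    unfolding int_choose_def catalan_eq_diff_choose by simp
  then show ?thesis
    using ballot_reflection[of "2 * r" 0 0 "int r"] by simp
qed

section \<open>Chebyshev expansion of the ballot numbers\<close>

text \<open>\<open>cheb_coeff p i\<close> is the coefficient of \<open>x^(p-2i)\<close> in the Chebyshev polynomial \<open>U_p(x/2)\<close>.\<close>

definition cheb_coeff :: "nat \<Rightarrow> nat \<Rightarrow> int" where
  "cheb_coeff p i = (-1) ^ i * int ((p - i) choose i)"

lemma cheb_coeff_0 [simp]: "cheb_coeff p 0 = 1"
  unfolding cheb_coeff_def by simp

lemma cheb_coeff_eq_0: "p < 2 * i \<Longrightarrow> cheb_coeff p i = 0"
  unfolding cheb_coeff_def by simp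

lemma cheb_coeff_Suc_Suc:
  "cheb_coeff (Suc (Suc p)) (Suc k) = cheb_coeff (Suc p) (Suc k) - cheb_coeff p k"
proof (cases "k \<le> p")
  case True
  then have "Suc (Suc p) - Suc k = Suc (p - k)" "Suc p - Suc k = p - k" by simp_all
  then show ?thesis unfolding cheb_coeff_def by (simp add: algebra_simps)
qed (simp add: cheb_coeff_def)

lemma sum_cheb_coeff_Suc_Suc:
  fixes f :: "nat \<Rightarrow> int"
  shows "(\<Sum>k\<le>Suc (Suc p). cheb_coeff (Suc (Suc p)) k * f k)
       = (\<Sum>k\<le>Suc p. cheb_coeff (Suc p) k * f k) - (\<Sum>k\<le>p. cheb_coeff p k * f (Suc k))"
proof -
  have "(\<Sum>k\<le>Suc (Suc p). cheb_coeff (Suc (Suc p)) k * f k)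
      = f 0 + (\<Sum>k\<le>Suc p. cheb_coeff (Suc p) (Suc k) * f (Suc k))
            - (\<Sum>k\<le>Suc p. cheb_coeff p k * f (Suc k))"
    by (simp add: sum.atMost_Suc_shift cheb_coeff_Suc_Suc algebra_simps sum_subtractf
             del: sum.atMost_Suc)
  also have "f 0 + (\<Sum>k\<le>Suc p. cheb_coeff (Suc p) (Suc k) * f (Suc k))
           = (\<Sum>k\<le>Suc (Suc p). cheb_coeff (Suc p) k * f k)"
    by (simp only: sum.atMost_Suc_shift cheb_coeff_0 mult_1)
  also have "\<dots> = (\<Sum>k\<le>Suc p. cheb_coeff (Suc p) k * f k)"
    by (simp add: cheb_coeff_eq_0)
  also have "(\<Sum>k\<le>Suc p. cheb_coeff p k * f (Suc k)) = (\<Sum>k\<le>p. cheb_coeff p k * f (Suc k))"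
    by (simp add: cheb_coeff_eq_0)
  finally show ?thesis .
qed

definition cheb_catalan :: "nat \<Rightarrow> nat \<Rightarrow> nat \<Rightarrow> int" where
  "cheb_catalan N p q =
     (\<Sum>i\<le>p. cheb_coeff p i * (\<Sum>k\<le>q. cheb_coeff q k * int (catalan (N - i - k))))"

lemma cheb_catalan_0_left:
  "cheb_catalan N 0 q = (\<Sum>k\<le>q. cheb_coeff q k * int (catalan (N - k)))"
  unfolding cheb_catalan_def by simp

lemma cheb_catalan_1_left: "cheb_catalan N (Suc 0) q = cheb_catalan N 0 q"
  unfolding cheb_catalan_def by (simp add: cheb_coeff_eq_0)

lemma cheb_catalan_Suc_Suc_left:
  "cheb_catalan N (Suc (Suc p)) q = cheb_catalan N (Suc p) q - cheb_catalan (N - 1) p q"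
proof -
  have "(\<Sum>i\<le>p. cheb_coeff p i * (\<Sum>k\<le>q. cheb_coeff q k * int (catalan (N - Suc i - k))))
      = cheb_catalan (N - 1) p q"
    unfolding cheb_catalan_def by (simp only: diff_Suc_eq_diff_pred)
  then show ?thesis
    unfolding cheb_catalan_def[of N] sum_cheb_coeff_Suc_Suc by simp
qed

lemma cheb_catalan_0_Suc_Suc:
  "cheb_catalan N 0 (Suc (Suc q)) = cheb_catalan N 0 (Suc q) - cheb_catalan (N - 1) 0 q"
proof -
  have "(\<Sum>k\<le>q. cheb_coeff q k * int (catalan (N - Suc k))) = cheb_catalan (N - 1) 0 q"
    unfolding cheb_catalan_0_left by (simp only: diff_Suc_eq_diff_pred diff_right_commute)
  then show ?thesis
    unfolding cheb_catalan_0_left[of N] sum_cheb_coeff_Suc_Suc by simp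
qed

lemma ballot_0_left_eq_cheb_catalan:
  "even (L + q) \<Longrightarrow> int (ballot L 0 q) = cheb_catalan ((L + q) div 2) 0 q"
proof (induction q arbitrary: L rule: nat_less_induct)
  case (1 q)
  consider "q = 0" | "q = 1" | q' where "q = Suc (Suc q')"
    by (metis One_nat_def not0_implies_Suc)
  then show ?case
  proof cases
    case 1
    with "1.prems" obtain r where "L = 2 * r" by (auto elim: evenE)
    then show ?thesis using \<open>q = 0\<close> ballot_catalan[of r] by (simp add: cheb_catalan_0_left)
  next
    case 2
    with "1.prems" have "even (Suc L)" by simp
    then obtain r where r: "Suc L = 2 * r" ..
    have "ballot L 0 1 = ballot (Suc L) 0 0" using ballot_Suc_right[of L 0 0] by simp
    then show ?thesis
      using \<open>q = 1\<close> ballot_catalan[of r] r by (simp add: cheb_catalan_0_left cheb_coeff_eq_0)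
  next
    case 3
    have "int (ballot L 0 q) = int (ballot (Suc L) 0 (Suc q')) - int (ballot L 0 q')"
      using ballot_Suc_right[of L 0 "Suc q'"] 3 by simp
    also have "\<dots> = cheb_catalan ((L + q) div 2) 0 (Suc q') - cheb_catalan ((L + q) div 2 - 1) 0 q'"
      using "1.IH"[rule_format, of "Suc q'" "Suc L"] "1.IH"[rule_format, of q' L] "1.prems" 3
      by simp
    also have "\<dots> = cheb_catalan ((L + q) div 2) 0 q"
      using 3 cheb_catalan_0_Suc_Suc by simp
    finally show ?thesis .
  qed
qed

lemma ballot_eq_cheb_catalan:
  "even (L + p + q) \<Longrightarrow> int (ballot L p q) = cheb_catalan ((L + p + q) div 2) p q"
proof (induction p arbitrary: L rule: nat_less_induct)
  case (1 p)
  consider "p = 0" | "p = 1" | p' where "p = Suc (Suc p')"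
    by (metis One_nat_def not0_implies_Suc)
  then show ?case
  proof cases
    case 1
    then show ?thesis using ballot_0_left_eq_cheb_catalan "1.prems" by simp
  next
    case 2
    have "ballot L 1 q = ballot (Suc L) 0 q" by simp
    then show ?thesis
      using ballot_0_left_eq_cheb_catalan[of "Suc L" q] "1.prems" \<open>p = 1\<close>
      by (simp add: cheb_catalan_1_left)
  next
    case 3
    have "int (ballot L p q) = int (ballot (Suc L) (Suc p') q) - int (ballot L p' q)"
      using 3 by simp
    also have "\<dots> = cheb_catalan ((L + p + q) div 2) (Suc p') q
                  - cheb_catalan ((L + p + q) div 2 - 1) p' q"
      using "1.IH"[rule_format, of "Suc p'" "Suc L"] "1.IH"[rule_format, of p' L] "1.prems" 3
      by simp
    also have "\<dots> = cheb_catalan ((L + p + q) div 2) p q"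
      using 3 cheb_catalan_Suc_Suc_left by simp
    finally show ?thesis .
  qed
qed

section \<open>Summing along an antidiagonal\<close>

lemma sum_choose_mult_choose:
  "(\<Sum>m\<le>M. (m choose a) * ((M - m) choose b)) = Suc M choose (a + b + 1)"
proof (induction M arbitrary: b)
  case 0
  then show ?case by (cases a; cases b; simp)
next
  case (Suc M)
  show ?case
  proof (cases b)
    case 0
    then show ?thesis using sum_choose_upper[of a "Suc M"] by simp
  next
    case (Suc b')
    have "(\<Sum>m\<le>Suc M. (m choose a) * ((Suc M - m) choose b))
        = (\<Sum>m\<le>M. (m choose a) * ((M - m) choose b) + (m choose a) * ((M - m) choose b'))"
      using Suc by (auto simp: Suc_diff_le algebra_simps intro!: sum.cong)
    also have "\<dots> = (Suc M choose (a + b + 1)) + (Suc M choose (a + b' + 1))"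
      by (simp add: sum.distrib Suc.IH)
    also have "\<dots> = Suc (Suc M) choose (a + b + 1)"
      using Suc by simp
    finally show ?thesis .
  qed
qed

lemma sum_choose_diff_mult_choose:
  "(\<Sum>p\<le>N. ((p - i) choose i) * ((N - p - k) choose k)) = (Suc N - (i + k)) choose (i + k + 1)"
proof (cases "i + k \<le> N")
  case True
  define M where "M = N - i - k"
  have "(\<Sum>p\<le>N. ((p - i) choose i) * ((N - p - k) choose k))
      = (\<Sum>p\<in>{i..N - k}. ((p - i) choose i) * ((N - p - k) choose k))"
    by (rule sum.mono_neutral_right) auto
  also have "\<dots> = (\<Sum>m\<le>M. (m choose i) * ((M - m) choose k))"
  proof -
    have "{i..N - k} = (\<lambda>m. m + i) ` {..M}"
    proof (intro equalityI subsetI)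
      fix x assume "x \<in> {i..N - k}"
      then show "x \<in> (\<lambda>m. m + i) ` {..M}"
        unfolding M_def by (intro image_eqI[of x _ "x - i"]) auto
    qed (use True in \<open>auto simp: M_def\<close>)
    then show ?thesis
      by (simp add: sum.reindex M_def algebra_simps)
  qed
  also have "\<dots> = (Suc N - (i + k)) choose (i + k + 1)"
    unfolding sum_choose_mult_choose M_def using True by (simp add: Suc_diff_le)
  finally show ?thesis .
next
  case False
  then show ?thesis by (auto intro!: sum.neutral)
qed

lemma sum_cheb_coeff_convolution:
  "(\<Sum>p\<le>N. cheb_coeff p i * cheb_coeff (N - p) k)
     = (-1) ^ (i + k) * int ((Suc N - (i + k)) choose (i + k + 1))"
proof -
  have "(\<Sum>p\<le>N. cheb_coeff p i * cheb_coeff (N - p) k)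
      = (-1) ^ (i + k) * int (\<Sum>p\<le>N. ((p - i) choose i) * ((N - p - k) choose k))"
    unfolding cheb_coeff_def of_nat_sum sum_distrib_left by (auto simp: power_add intro!: sum.cong)
  then show ?thesis unfolding sum_choose_diff_mult_choose .
qed

lemma sum_square_eq_sum_diagonals:
  fixes h :: "nat \<Rightarrow> 'a :: comm_semiring_1"
  assumes "\<And>J. J > N \<Longrightarrow> h J = 0"
  shows "(\<Sum>i\<le>N. \<Sum>k\<le>N. h (i + k)) = (\<Sum>J\<le>N. of_nat (J + 1) * h J)"
proof -
  have "(\<Sum>i\<le>N. \<Sum>k\<le>N. h (i + k)) = (\<Sum>(i, k)\<in>{..N} \<times> {..N}. h (i + k))"
    by (rule sum.cartesian_product)
  also have "\<dots> = (\<Sum>(i, k)\<in>{(i, k). i + k \<le> N}. h (i + k))"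
    by (rule sum.mono_neutral_right) (auto, metis assms not_le)
  also have "\<dots> = (\<Sum>J\<le>N. \<Sum>i\<le>J. h (i + (J - i)))"
    by (rule sum.triangle_reindex_eq)
  also have "\<dots> = (\<Sum>J\<le>N. of_nat (J + 1) * h J)"
    by simp
  finally show ?thesis .
qed

lemma cheb_catalan_as_square_sum:
  assumes "p \<le> N"
  shows "cheb_catalan m p (N - p)
           = (\<Sum>i\<le>N. \<Sum>k\<le>N. cheb_coeff p i * cheb_coeff (N - p) k * int (catalan (m - i - k)))"
proof -
  have extend: "(\<Sum>i\<le>r. cheb_coeff r i * f i) = (\<Sum>i\<le>N. cheb_coeff r i * f i)"
    if "r \<le> N" for r and f :: "nat \<Rightarrow> int"
    by (rule sum.mono_neutral_left) (use that in \<open>auto simp: cheb_coeff_eq_0\<close>)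
  have "cheb_catalan m p (N - p)
          = (\<Sum>i\<le>N. cheb_coeff p i * (\<Sum>k\<le>N. cheb_coeff (N - p) k * int (catalan (m - i - k))))"
    unfolding cheb_catalan_def extend[OF assms] by (simp add: extend)
  then show ?thesis by (simp add: sum_distrib_left mult.assoc)
qed

lemma sum_cheb_catalan_antidiagonal:
  "(\<Sum>p\<le>N. cheb_catalan m p (N - p))
     = (\<Sum>J\<le>N. int (J + 1) * ((-1) ^ J * int ((Suc N - J) choose (J + 1)) * int (catalan (m - J))))"
proof -
  define h where "h J = (-1) ^ J * int ((Suc N - J) choose (J + 1)) * int (catalan (m - J))" for J
  have "(\<Sum>p\<le>N. cheb_catalan m p (N - p))
      = (\<Sum>p\<le>N. \<Sum>i\<le>N. \<Sum>k\<le>N. cheb_coeff p i * cheb_coeff (N - p) k * int (catalan (m - i - k)))"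
    by (rule sum.cong) (auto simp: cheb_catalan_as_square_sum)
  also have "\<dots> = (\<Sum>i\<le>N. \<Sum>p\<le>N. \<Sum>k\<le>N. cheb_coeff p i * cheb_coeff (N - p) k * int (catalan (m - i - k)))"
    by (rule sum.swap)
  also have "\<dots> = (\<Sum>i\<le>N. \<Sum>k\<le>N. \<Sum>p\<le>N. cheb_coeff p i * cheb_coeff (N - p) k * int (catalan (m - i - k)))"
    by (rule sum.cong[OF refl], rule sum.swap)
  also have "\<dots> = (\<Sum>i\<le>N. \<Sum>k\<le>N. (\<Sum>p\<le>N. cheb_coeff p i * cheb_coeff (N - p) k) * int (catalan (m - i - k)))"
    by (simp add: sum_distrib_right)
  also have "\<dots> = (\<Sum>i\<le>N. \<Sum>k\<le>N. h (i + k))"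
    unfolding sum_cheb_coeff_convolution h_def by (simp add: diff_diff_add)
  also have "\<dots> = (\<Sum>J\<le>N. int (J + 1) * h J)"
    by (rule sum_square_eq_sum_diagonals) (simp add: h_def)
  finally show ?thesis unfolding h_def .
qed

lemma sum_ballot_antidiagonal:
  assumes "L + N = 2 * m"
  shows "(\<Sum>p\<le>N. int (ballot L p (N - p)))
     = (\<Sum>J\<le>N. int (J + 1) * ((-1) ^ J * int ((Suc N - J) choose (J + 1)) * int (catalan (m - J))))"
proof -
  have "int (ballot L p (N - p)) = cheb_catalan m p (N - p)" if "p \<le> N" for p
    using ballot_eq_cheb_catalan[of L p "N - p"] that assms by simp
  then show ?thesis
    unfolding sum_cheb_catalan_antidiagonal[symmetric] by (rule sum.cong[OF refl]) simp
qed

lemma sum_ballot_peak_heights: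
  fixes n s :: nat
  assumes "n \<ge> 2" and "s \<le> 2 * n - 2"
  shows "int (\<Sum>a\<in>{1..<s}. ballot (2 * n - s - 2) (a - 1) (s - a - 1))
         = (\<Sum>j = 1..s div 2. (-1) ^ (j - 1) * int j * int ((s - j) choose j)
                               * int (catalan (n - 1 - j)))"
proof (cases "s < 2")
  case True
  then show ?thesis by auto
next
  case False
  define N where "N = s - 2"
  have s: "s = Suc (Suc N)" unfolding N_def using False by simp
  have "int (\<Sum>a\<in>{1..<s}. ballot (2 * n - s - 2) (a - 1) (s - a - 1))
      = (\<Sum>p\<le>N. int (ballot (2 * n - s - 2) p (N - p)))"
  proof -
    have "{1..<s} = Suc ` {..N}" unfolding s image_Suc_atMost by auto
    then show ?thesis by (simp add: sum.reindex s)
  qed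
  also have "\<dots> = (\<Sum>J\<le>N. int (J + 1) * ((-1) ^ J * int ((s - Suc J) choose (J + 1))
                                             * int (catalan (n - 1 - Suc J))))"
    using sum_ballot_antidiagonal[of "2 * n - s - 2" N "n - 2"] assms s by simp
  also have "\<dots> = (\<Sum>j = 1..Suc N. (-1) ^ (j - 1) * int j * int ((s - j) choose j)
                                    * int (catalan (n - 1 - j)))"
  proof -
    have "{1..Suc N} = Suc ` {..N}" by (simp add: image_Suc_atMost)
    then show ?thesis by (simp add: sum.reindex mult.assoc mult.left_commute)
  qed
  also have "\<dots> = (\<Sum>j = 1..s div 2. (-1) ^ (j - 1) * int j * int ((s - j) choose j)
                                      * int (catalan (n - 1 - j)))"
    by (rule sum.mono_neutral_right) (auto simp: s)
  finally show ?thesis .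
qed

section \<open>Decomposing a Dyck path at its first and last peaks\<close>

lemma leading_run:
  fixes xs :: "bool list"
  assumes "False \<in> set xs"
  obtains a r where "xs = replicate a True @ False # r"
proof -
  obtain ys r where xs: "xs = ys @ False # r" and "False \<notin> set ys"
    using split_list_first[OF assms] by blast
  then have "ys = replicate (length ys) True"
    by (metis (full_types) replicate_length_same)
  with xs that show ?thesis by metis
qed

lemma trailing_run:
  fixes xs :: "bool list"
  assumes "True \<in> set xs"
  obtains r b where "xs = r @ True # replicate b False"
proof -
  obtain r zs where xs: "xs = r @ True # zs" and "True \<notin> set zs"
    using split_list_last[OF assms] by blast
  then have "zs = replicate (length zs) False"
    by (metis (full_types) replicate_length_same)
  with xs that show ?thesis by metis
qed

lemma finite_peaks: "finite (peaks xs)"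
  unfolding peaks_def by (rule finite_subset[of _ "{..<length xs}"]) auto

lemma first_peak_height_leading_run:
  assumes "1 \<le> a"
  shows "first_peak_height (replicate a True @ False # r) = int a"
proof -
  let ?xs = "replicate a True @ False # r"
  have "Min (peaks ?xs) = a - 1"
  proof (rule Min_eqI)
    show "a - 1 \<in> peaks ?xs"
      using assms by (simp add: peaks_def nth_append)
    fix i assume "i \<in> peaks ?xs"
    then have "\<not> ?xs ! Suc i" unfolding peaks_def by simp
    then show "a - 1 \<le> i" by (cases "Suc i < a") (auto simp: nth_append)
  qed (rule finite_peaks)
  then show ?thesis
    unfolding first_peak_height_def peak_height_def using assms by simp
qed

lemma last_peak_height_trailing_run:
  assumes "1 \<le> b"
  shows "last_peak_height (r @ True # replicate b False) = height r + 1"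
proof -
  let ?xs = "r @ True # replicate b False"
  have "Max (peaks ?xs) = length r"
  proof (rule Max_eqI)
    show "length r \<in> peaks ?xs"
      using assms by (simp add: peaks_def nth_append)
    fix i assume "i \<in> peaks ?xs"
    then have "?xs ! i" "i < length ?xs" unfolding peaks_def by auto
    then show "i \<le> length r" by (cases "i > length r") (auto simp: nth_append)
  qed (rule finite_peaks)
  then show ?thesis
    unfolding last_peak_height_def peak_height_def by simp
qed

definition framed_path :: "nat \<Rightarrow> nat \<Rightarrow> bool list \<Rightarrow> bool list" where
  "framed_path a b M = replicate a True @ False # M @ True # replicate b False"

lemma inj_framed_path: "inj (framed_path a b)"
  by (rule injI) (simp add: framed_path_def)

lemma first_peak_height_framed_path:
  "1 \<le> a \<Longrightarrow> first_peak_height (framed_path a b M) = int a"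
  unfolding framed_path_def by (rule first_peak_height_leading_run)

lemma last_peak_height_framed_path:
  "1 \<le> b \<Longrightarrow> last_peak_height (framed_path a b M) = int a + height M"
  using last_peak_height_trailing_run[of b "replicate a True @ False # M"]
  by (simp add: framed_path_def)

lemma dyck_path_framed_path_iff:
  assumes "1 \<le> a" "1 \<le> b"
  shows "dyck_path n (framed_path a b M) \<longleftrightarrow>
           a + b + 2 \<le> 2 * n \<and> M \<in> nonneg_paths (2 * n - a - b - 2) (a - 1) (b - 1)"
  using assms
  by (auto simp: dyck_path_iff_nonneg_from framed_path_def nonneg_paths_def nonneg_from_append
                 nonneg_from_replicate_True nonneg_from_replicate_False of_nat_diff algebra_simps
           dest: nonneg_from_start)

lemma dyck_path_framed_decomposition:
  assumes dyck: "dyck_path n xs" and "1 \<le> n"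
    and peaks: "first_peak_height xs + last_peak_height xs \<le> int (2 * n - 2)"
  obtains a b M where "1 \<le> a" "1 \<le> b" "xs = framed_path a b M"
proof -
  have len: "length xs = 2 * n" and h0: "height xs = 0" and nonneg: "nonneg_from 0 xs"
    using dyck by (auto simp: dyck_path_iff_nonneg_from)
  have "False \<in> set xs"
  proof (rule ccontr)
    assume "False \<notin> set xs"
    then have "xs = replicate (length xs) True" by (metis (full_types) replicate_length_same)
    then have "height xs = int (2 * n)" using len by (metis height_replicate_True)
    then show False using h0 \<open>1 \<le> n\<close> by simp
  qed
  then obtain a r1 where xs1: "xs = replicate a True @ False # r1" by (rule leading_run)
  have a: "1 \<le> a"
    using nonneg xs1 by (cases a) (auto dest: nonneg_from_start)
  have "True \<in> set xs"
  proof (rule ccontr)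
    assume "True \<notin> set xs"
    then have "xs = replicate (length xs) False" by (metis (full_types) replicate_length_same)
    then have "height xs = - int (2 * n)" using len by (metis height_replicate_False)
    then show False using h0 \<open>1 \<le> n\<close> by simp
  qed
  then obtain r2 b where xs2: "xs = r2 @ True # replicate b False" by (rule trailing_run)
  have b: "1 \<le> b"
    using nonneg h0 xs2 by (cases b) (auto simp: nonneg_from_append dest: nonneg_from_end)
  have "first_peak_height xs = int a"
    unfolding xs1 using a by (rule first_peak_height_leading_run)
  moreover have "last_peak_height xs = height r2 + 1"
    unfolding xs2 using b by (rule last_peak_height_trailing_run)
  ultimately have "int a + (height r2 + 1) \<le> int (2 * n - 2)"
    using peaks by simp
  moreover have "height r2 + 1 = int b" using h0 xs2 by simp
  ultimately have room: "Suc a \<le> length r2" using len xs2 by simp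
  define M where "M = drop (Suc a) r2"
  have "take (Suc a) xs = replicate a True @ [False]"
    using xs1 by simp
  moreover have "take (Suc a) xs = take (Suc a) r2"
    using xs2 room by simp
  ultimately have "r2 = (replicate a True @ [False]) @ M"
    unfolding M_def by (metis append_take_drop_id)
  then have "xs = framed_path a b M"
    unfolding framed_path_def xs2 by simp
  with a b that show ?thesis by blast
qed

lemma dyck_paths_with_peak_sum_eq_UN:
  assumes "1 \<le> n" "s \<le> 2 * n - 2"
  shows "{xs. dyck_path n xs \<and> first_peak_height xs + last_peak_height xs = int s}
           = (\<Union>a\<in>{1..<s}. framed_path a (s - a) ` nonneg_paths (2 * n - s - 2) (a - 1) (s - a - 1))"
    (is "?S = ?U")
proof (intro equalityI subsetI)
  fix xs assume "xs \<in> ?S"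
  then have dyck: "dyck_path n xs" and s: "first_peak_height xs + last_peak_height xs = int s"
    by auto
  then obtain a b M where ab: "1 \<le> a" "1 \<le> b" and xs: "xs = framed_path a b M"
    using dyck_path_framed_decomposition[OF dyck \<open>1 \<le> n\<close>] assms(2) by auto
  then have M: "M \<in> nonneg_paths (2 * n - a - b - 2) (a - 1) (b - 1)"
    using dyck dyck_path_framed_path_iff by blast
  then have "int a + height M = int b"
    using ab by (simp add: nonneg_paths_def of_nat_diff)
  then have sab: "s = a + b"
    using s xs ab first_peak_height_framed_path last_peak_height_framed_path by simp
  then have "M \<in> nonneg_paths (2 * n - s - 2) (a - 1) (s - a - 1)"
    using M by (simp add: diff_diff_add)
  then have "xs \<in> framed_path a (s - a) ` nonneg_paths (2 * n - s - 2) (a - 1) (s - a - 1)"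
    unfolding xs using sab by simp
  moreover have "a \<in> {1..<s}"
    using ab sab by simp
  ultimately show "xs \<in> ?U" by blast
next
  fix xs assume "xs \<in> ?U"
  then obtain a M where a: "1 \<le> a" "a < s" and xs: "xs = framed_path a (s - a) M"
    and M: "M \<in> nonneg_paths (2 * n - s - 2) (a - 1) (s - a - 1)"
    by auto
  have "2 * n - a - (s - a) - 2 = 2 * n - s - 2" "a + (s - a) + 2 \<le> 2 * n"
    using a assms(2) by simp_all
  then have "dyck_path n xs"
    unfolding xs using M a dyck_path_framed_path_iff[of a "s - a" n M] by simp
  moreover have "first_peak_height xs + last_peak_height xs = int s"
  proof -
    have "int a + height M = int (s - a)"
      using M a by (simp add: nonneg_paths_def of_nat_diff)
    then show ?thesis
      unfolding xs using a first_peak_height_framed_path last_peak_height_framed_path by simp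
  qed
  ultimately show "xs \<in> ?S" by simp
qed

lemma card_dyck_paths_with_peak_sum:
  assumes "1 \<le> n" "s \<le> 2 * n - 2"
  shows "card {xs. dyck_path n xs \<and> first_peak_height xs + last_peak_height xs = int s}
           = (\<Sum>a\<in>{1..<s}. ballot (2 * n - s - 2) (a - 1) (s - a - 1))"
proof -
  have "card (\<Union>a\<in>{1..<s}. framed_path a (s - a) ` nonneg_paths (2 * n - s - 2) (a - 1) (s - a - 1))
          = (\<Sum>a\<in>{1..<s}. card (framed_path a (s - a) ` nonneg_paths (2 * n - s - 2) (a - 1) (s - a - 1)))"
  proof (rule card_UN_disjoint)
    show "\<forall>a\<in>{1..<s}. \<forall>a'\<in>{1..<s}. a \<noteq> a' \<longrightarrow>
            framed_path a (s - a) ` nonneg_paths (2 * n - s - 2) (a - 1) (s - a - 1) \<inter>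
            framed_path a' (s - a') ` nonneg_paths (2 * n - s - 2) (a' - 1) (s - a' - 1) = {}"
      by (auto dest: arg_cong[of _ _ first_peak_height] simp: first_peak_height_framed_path)
  qed (auto simp: finite_nonneg_paths)
  then show ?thesis
    unfolding dyck_paths_with_peak_sum_eq_UN[OF assms]
    by (simp add: card_image inj_on_subset[OF inj_framed_path] card_nonneg_paths)
qed

theorem proposition3p4:
  fixes n s :: nat
  assumes "n \<ge> 2" and "s \<le> 2 * n - 2"
  shows "int (card {xs. dyck_path n xs \<and>
                      first_peak_height xs + last_peak_height xs = int s})
         = (\<Sum>j = 1..s div 2. (-1) ^ (j - 1) * int j * int ((s - j) choose j)
                               * int (catalan (n - 1 - j)))"
  using card_dyck_paths_with_peak_sum[of n s] sum_ballot_peak_heights[OF assms] assms by simp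

end
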